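(* Let $T,S$ be bounded linear operators on a Banach space with $ST=\nu\,\mathrm{id}$ for some $\nu\in\mathbb C\setminus\{0\}$. Then for all $h\in\mathbb N$, \[(T+S)^h=\sum_{k=0}^{\lfloor h/2\rfloor}\alpha_{h,k}\,\nu^k\sum_{l=0}^{h-2k}T^lS^{\,h-2k-l},\qquad\alpha_{h,k}:=\binom hk-\binom h{k-1},\] with the convention $\binom h{-1}=0$ and $\alpha_{0,0}=1$.
   Context: $\mathbb N=\{0,1,2,\dots\}$; $T^0=S^0=\mathrm{id}$. *)

theory Defs
  imports "HOL-Analysis.Analysis"
begin

class scaleC =
  fixes scaleC :: "complex \<Rightarrow> 'a \<Rightarrow> 'a" (infixr \<open>*\<^sub>C\<close> 75)

class complex_banach = scaleC + banach +
  assumes scaleC_add_right: "a *\<^sub>C (x + y) = a *\<^sub>C x + a *\<^sub>C y"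
    and scaleC_add_left: "(a + b) *\<^sub>C x = a *\<^sub>C x + b *\<^sub>C x"
    and scaleC_scaleC: "a *\<^sub>C b *\<^sub>C x = (a * b) *\<^sub>C x"
    and scaleC_one: "1 *\<^sub>C x = x"
    and scaleR_scaleC: "r *\<^sub>R x = complex_of_real r *\<^sub>C x"
    and norm_scaleC: "norm (a *\<^sub>C x) = cmod a * norm x"

definition bounded_clinear :: "('a::complex_banach \<Rightarrow> 'b::complex_banach) \<Rightarrow> bool" where
  "bounded_clinear f \<longleftrightarrow>
     (\<forall>x y. f (x + y) = f x + f y) \<and> (\<forall>c x. f (c *\<^sub>C x) = c *\<^sub>C f x) \<and>
     (\<exists>K. \<forall>x. norm (f x) \<le> norm x * K)"

definition alpha_coef :: "nat \<Rightarrow> nat \<Rightarrow> int" where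
  "alpha_coef h k = int (h choose k) - (if k = 0 then 0 else int (h choose (k - 1)))"

end

theory Submission
  imports Defs
begin

(* Let H m = \<Sum>{T^l S^j | l + j = m}. A word of length m + 1 either is S^(m+1) or starts with T, and
   ST = \<nu> collapses S T H (m - 1) to \<nu> H (m - 1); hence (T + S) H m = H (m + 1) + \<nu> H (m - 1) with
   H (-1) = 0. This is the recurrence of the Chebyshev polynomials of the second kind, so the powers
   of T + S expand in the H m as powers of 2 cos t expand in the U m: the coefficients obey Pascal's
   rule alpha (h+1) k = alpha h k + alpha h (k-1), and the boundary term vanishes because
   alpha (2n+1) (n+1) = 0. *)

no_notation vector_scalar_mult (infixl \<open>*s\<close> 70)

lemma alpha_coef_0 [simp]: "alpha_coef h 0 = 1"
  by (simp add: alpha_coef_def)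

lemma alpha_coef_Suc_Suc: "alpha_coef (Suc h) (Suc k) = alpha_coef h (Suc k) + alpha_coef h k"
  by (cases k) (simp_all add: alpha_coef_def)

lemma alpha_coef_odd_middle: "alpha_coef (Suc (2 * n)) (Suc n) = 0"
  using binomial_symmetric[of n "Suc (2 * n)"] by (simp add: alpha_coef_def)

(* Shifted by one: mixed_power_sum T S (Suc m) is H m, and mixed_power_sum T S 0 = 0 is H (-1). *)
definition mixed_power_sum ::
    "('a \<Rightarrow> 'a) \<Rightarrow> ('a \<Rightarrow> 'a) \<Rightarrow> nat \<Rightarrow> 'a \<Rightarrow> 'a::comm_monoid_add" where
  "mixed_power_sum T S m x = (\<Sum>l<m. (T ^^ l) ((S ^^ (m - 1 - l)) x))"

lemma mixed_power_sum_0 [simp]: "mixed_power_sum T S 0 x = 0"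
  by (simp add: mixed_power_sum_def)

lemma mixed_power_sum_1 [simp]: "mixed_power_sum T S 1 x = x"
  by (simp add: mixed_power_sum_def)

lemma mixed_power_sum_Suc:
  assumes "Modules.additive T"
  shows "mixed_power_sum T S (Suc m) x = (S ^^ m) x + T (mixed_power_sum T S m x)"
  unfolding mixed_power_sum_def sum.lessThan_Suc_shift
  by (simp add: additive.sum[OF assms] funpow_swap1)

context module
begin

lemma mixed_power_sum_recurrence:
  assumes "Modules.additive T" and "Modules.additive S" and ST: "\<And>x. S (T x) = \<nu> *s x"
  shows "T (mixed_power_sum T S (Suc m) x) + S (mixed_power_sum T S (Suc m) x)
    = mixed_power_sum T S (Suc (Suc m)) x + \<nu> *s mixed_power_sum T S m x"
  using mixed_power_sum_Suc[OF \<open>Modules.additive T\<close>, of S "Suc m" x]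
    mixed_power_sum_Suc[OF \<open>Modules.additive T\<close>, of S m x]
  by (simp add: additive.add[OF \<open>Modules.additive S\<close>] ST algebra_simps)

(* Summing over all k \<le> h is harmless: the extra terms contain q 0 = 0, except for 2 k = h + 1,
   where the coefficient vanishes. *)
lemma funpow_apply_eq_alpha_coef_sum_atMost:
  assumes A: "module_hom scale scale A"
    and q0: "q 0 = 0" and q_rec: "\<And>m. A (q (Suc m)) = q (Suc (Suc m)) + \<nu> *s q m"
  shows "(A ^^ h) (q 1) = (\<Sum>k\<le>h. (of_int (alpha_coef h k) * \<nu> ^ k) *s q (Suc h - 2 * k))"
proof (induction h)
  case 0
  then show ?case by simp
next
  case (Suc h)
  define c where "c h k = of_int (alpha_coef h k) * \<nu> ^ k" for h k
  have summand: "c h k *s A (q (Suc h - 2 * k))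
      = c h k *s q (Suc (Suc h) - 2 * k) + (\<nu> * c h k) *s q (h - 2 * k)" for k
  proof -
    consider "2 * k \<le> h" | "2 * k = Suc h" | "Suc (Suc h) \<le> 2 * k"
      by linarith
    then show ?thesis
    proof cases
      case 1
      then have "Suc h - 2 * k = Suc (h - 2 * k)" "Suc (Suc h) - 2 * k = Suc (Suc (h - 2 * k))"
        by auto
      then show ?thesis by (simp add: q_rec scale_right_distrib mult.commute)
    next
      case 2
      then obtain n where k: "k = Suc n"
        by (cases k) auto
      with 2 have "h = Suc (2 * n)"
        by simp
      with k show ?thesis by (simp add: c_def alpha_coef_odd_middle)
    next
      case 3
      then show ?thesis by (simp add: q0 module_hom.zero[OF A])
    qed
  qed
  have c_Suc_0: "c (Suc h) 0 = c h 0"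
    by (simp add: c_def)
  have c_Suc_Suc: "c (Suc h) (Suc k) = c h (Suc k) + \<nu> * c h k" for k
    by (simp add: c_def alpha_coef_Suc_Suc algebra_simps)
  have "(A ^^ Suc h) (q 1) = (\<Sum>k\<le>h. c h k *s A (q (Suc h - 2 * k)))"
    using Suc.IH by (simp add: module_hom.sum[OF A] module_hom.scale[OF A] c_def)
  also have "\<dots> = (\<Sum>k\<le>h. c h k *s q (Suc (Suc h) - 2 * k))
      + (\<Sum>k\<le>h. (\<nu> * c h k) *s q (h - 2 * k))"
    by (simp add: summand sum.distrib)
  also have "(\<Sum>k\<le>h. c h k *s q (Suc (Suc h) - 2 * k))
      = (\<Sum>k\<le>Suc h. c h k *s q (Suc (Suc h) - 2 * k))"
    by (simp add: q0)
  also have "\<dots> = c h 0 *s q (Suc (Suc h)) + (\<Sum>k\<le>h. c h (Suc k) *s q (h - 2 * k))"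
    unfolding sum.atMost_Suc_shift by simp
  also have "\<dots> + (\<Sum>k\<le>h. (\<nu> * c h k) *s q (h - 2 * k))
      = (\<Sum>k\<le>Suc h. c (Suc h) k *s q (Suc (Suc h) - 2 * k))"
    unfolding sum.atMost_Suc_shift
    by (simp add: c_Suc_0 c_Suc_Suc scale_left_distrib sum.distrib add.assoc)
  finally show ?case by (simp add: c_def)
qed

lemma funpow_apply_eq_alpha_coef_sum:
  assumes "module_hom scale scale A"
    and "q 0 = 0" and "\<And>m. A (q (Suc m)) = q (Suc (Suc m)) + \<nu> *s q m"
  shows "(A ^^ h) (q 1)
    = (\<Sum>k\<in>{0..h div 2}. (of_int (alpha_coef h k) * \<nu> ^ k) *s q (Suc (h - 2 * k)))"
proof -
  have "(\<Sum>k\<le>h. (of_int (alpha_coef h k) * \<nu> ^ k) *s q (Suc h - 2 * k))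
      = (\<Sum>k\<in>{0..h div 2}. (of_int (alpha_coef h k) * \<nu> ^ k) *s q (Suc h - 2 * k))"
    using \<open>q 0 = 0\<close> by (intro sum.mono_neutral_right) auto
  also have "\<dots> = (\<Sum>k\<in>{0..h div 2}. (of_int (alpha_coef h k) * \<nu> ^ k) *s q (Suc (h - 2 * k)))"
    by (intro sum.cong) (auto simp: Suc_diff_le)
  finally show ?thesis
    using funpow_apply_eq_alpha_coef_sum_atMost[OF assms] by simp
qed

end

interpretation complex_module: module "scaleC :: complex \<Rightarrow> 'a::complex_banach \<Rightarrow> 'a"
  by unfold_locales (simp_all add: scaleC_add_right scaleC_add_left scaleC_scaleC scaleC_one)

lemma bounded_clinear_imp_module_hom: "bounded_clinear f \<Longrightarrow> module_hom scaleC scaleC f"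
  unfolding bounded_clinear_def
  by (simp add: module_hom_def module_hom_axioms_def complex_module.module_axioms)

theorem lemma3p1:
  fixes T S :: "'a::complex_banach \<Rightarrow> 'a" and \<nu> :: complex and h :: nat
  assumes "bounded_clinear T" and "bounded_clinear S"
    and "\<And>x. S (T x) = \<nu> *\<^sub>C x" and "\<nu> \<noteq> 0"
  shows "((\<lambda>x. T x + S x) ^^ h) =
    (\<lambda>x. \<Sum>k\<in>{0..h div 2}. (of_int (alpha_coef h k) * \<nu> ^ k) *\<^sub>C
           (\<Sum>l\<in>{0..h - 2 * k}. (T ^^ l) ((S ^^ (h - 2 * k - l)) x)))"
proof
  fix x
  have T: "module_hom scaleC scaleC T" and S: "module_hom scaleC scaleC S"
    using assms(1,2) by (simp_all add: bounded_clinear_imp_module_hom)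
  have "((\<lambda>x. T x + S x) ^^ h) (mixed_power_sum T S 1 x)
      = (\<Sum>k\<in>{0..h div 2}.
          (of_int (alpha_coef h k) * \<nu> ^ k) *\<^sub>C mixed_power_sum T S (Suc (h - 2 * k)) x)"
  proof (rule complex_module.funpow_apply_eq_alpha_coef_sum)
    show "module_hom scaleC scaleC (\<lambda>x. T x + S x)"
      using T S by (simp add: module_hom_iff scaleC_add_right)
    show "T (mixed_power_sum T S (Suc m) x) + S (mixed_power_sum T S (Suc m) x)
        = mixed_power_sum T S (Suc (Suc m)) x + \<nu> *\<^sub>C mixed_power_sum T S m x" for m
      using T S assms(3)
      by (intro complex_module.mixed_power_sum_recurrence Modules.additive.intro)
        (auto intro: module_hom.add)
  qed simp
  then show "((\<lambda>x. T x + S x) ^^ h) x = (\<Sum>k\<in>{0..h div 2}. (of_int (alpha_coef h k) * \<nu> ^ k) *\<^sub>C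
           (\<Sum>l\<in>{0..h - 2 * k}. (T ^^ l) ((S ^^ (h - 2 * k - l)) x)))"
    by (simp add: mixed_power_sum_def atLeast0AtMost lessThan_Suc_atMost)
qed

end
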